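(* Let $\alpha>1$, $\mathcal{D}_\alpha\in\{\mathcal{F}_\alpha,\mathcal{P}_\alpha\}$, $\lambda\in[0,\infty)^d$ with $\lambda_1\le\lambda_2\le\cdots\le\lambda_d$, and $i\in[d]$. Then $$\frac{J_i(\lambda;\mathcal{D}_\alpha)}{\phi_i(\lambda;\mathcal{D}_\alpha)}\le\max_{\substack{w\in\{0\}\cup[(m\wedge i)-1]\\ \theta\in[(m\wedge i)-w]}}\left\{\frac{J_{i,\theta}(\lambda^*;\mathcal{D}_\alpha,\mathcal{B}_{i,w})}{\phi_{i,\theta}(\lambda^*;\mathcal{D}_\alpha,\mathcal{B}_{i,w})}\right\},$$ where $\mathcal{B}_{i,0}=[i]$, $\mathcal{B}_{i,w}=[i]\setminus[w]$ for $w\ge1$, and $\lambda^*_k=\lambda_i$ for $k\le i$, $\lambda^*_k=\lambda_k$ for $k>i$.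
   Context: $[n]=\{1,\dots,n\}$, $[0]=\emptyset$, $a\wedge b=\min(a,b)$. Integers $1\le m\le d$. Fréchet $\mathcal{F}_\alpha$: CDF $F(x)=e^{-1/x^\alpha}$, density $f(x)=\alpha x^{-(\alpha+1)}e^{-1/x^\alpha}$, $x\ge0$, left endpoint $\nu=0$; Pareto $\mathcal{P}_\alpha$: $F(x)=1-x^{-\alpha}$, $f(x)=\alpha x^{-(\alpha+1)}$, $x\ge1$, $\nu=1$. For $\mathcal{B}\subseteq[d]$, $i\in\mathcal{B}$, $u\in\mathbb{R}^d$, $\mathrm{rank}(i,u;\mathcal{B})$ is the rank of $u_i$ among $\{u_j:j\in\mathcal{B}\}$ in descending order. For $\mathcal{D}\in\{\mathcal{F}_\alpha,\mathcal{P}_\alpha\}$ with CDF $F$, density $f$, left endpoint $\nu$, $\lambda\in[0,\infty)^d$, integer $\theta\ge1$: $$\phi_{i,\theta}(\lambda;\mathcal{D},\mathcal{B})=\int_{\nu-\lambda_i}^\infty\sum_{S\subseteq\mathcal{B}\setminus\{i\},|S|=\theta-1}\prod_{j\in S}(1-F(z+\lambda_j))\prod_{j\in\mathcal{B}\setminus(S\cup\{i\})}F(z+\lambda_j)\,f(z+\lambda_i)\,dz,$$ which equals $\mathbb{P}[\mathrm{rank}(i,r-\lambda;\mathcal{B})=\theta]$ for $r$ with i.i.d. coordinates from $\mathcal{D}$ (empty sum $=0$), and $J_{i,\theta}(\lambda;\mathcal{D},\mathcal{B})$ is the same integral with the additional factor $\frac{1}{z+\lambda_i}$ in the integrand (equivalently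 $\mathbb{E}[\mathbf 1\{\mathrm{rank}(i,r-\lambda;\mathcal{B})=\theta\}/r_i]$). Further $\phi_i(\lambda;\mathcal{D},\tilde m,\mathcal{B})=\sum_{\theta=1}^{\tilde m}\phi_{i,\theta}(\lambda;\mathcal{D},\mathcal{B})$, $J_i(\lambda;\mathcal{D},\tilde m,\mathcal{B})=\sum_{\theta=1}^{\tilde m}J_{i,\theta}(\lambda;\mathcal{D},\mathcal{B})$, $\phi_i(\lambda;\mathcal{D})=\phi_i(\lambda;\mathcal{D},m,[d])$ and $J_i(\lambda;\mathcal{D})=J_i(\lambda;\mathcal{D},m,[d])$. *)

theory Defs
  imports "HOL-Analysis.Analysis"
begin

datatype distr = Frechet real | Pareto real

fun cdf :: "distr \<Rightarrow> real \<Rightarrow> real" where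
  "cdf (Frechet a) x = (if x \<le> 0 then 0 else exp (- (x powr (- a))))"
| "cdf (Pareto a) x = (if x < 1 then 0 else 1 - x powr (- a))"

fun dens :: "distr \<Rightarrow> real \<Rightarrow> real" where
  "dens (Frechet a) x = (if x \<le> 0 then 0 else a * x powr (- (a + 1)) * exp (- (x powr (- a))))"
| "dens (Pareto a) x = (if x < 1 then 0 else a * x powr (- (a + 1)))"

fun lep :: "distr \<Rightarrow> real" where
  "lep (Frechet a) = 0"
| "lep (Pareto a) = 1"

definition rank_integrand ::
  "distr \<Rightarrow> (nat \<Rightarrow> real) \<Rightarrow> nat set \<Rightarrow> nat \<Rightarrow> nat \<Rightarrow> real \<Rightarrow> real" where
  "rank_integrand D lam B i \<theta> z =
     (\<Sum>S | S \<subseteq> B - {i} \<and> card S = \<theta> - 1.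
        (\<Prod>j\<in>S. 1 - cdf D (z + lam j)) *
        (\<Prod>j\<in>B - (S \<union> {i}). cdf D (z + lam j))) * dens D (z + lam i)"

definition phi_theta :: "nat \<Rightarrow> nat \<Rightarrow> (nat \<Rightarrow> real) \<Rightarrow> distr \<Rightarrow> nat set \<Rightarrow> real" where
  "phi_theta i \<theta> lam D B =
     (LBINT z:{lep D - lam i..}. rank_integrand D lam B i \<theta> z)"

definition J_theta :: "nat \<Rightarrow> nat \<Rightarrow> (nat \<Rightarrow> real) \<Rightarrow> distr \<Rightarrow> nat set \<Rightarrow> real" where
  "J_theta i \<theta> lam D B =
     (LBINT z:{lep D - lam i..}. rank_integrand D lam B i \<theta> z / (z + lam i))"

definition phi_sum :: "nat \<Rightarrow> (nat \<Rightarrow> real) \<Rightarrow> distr \<Rightarrow> nat \<Rightarrow> nat set \<Rightarrow> real" where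
  "phi_sum i lam D mt B = (\<Sum>\<theta>=1..mt. phi_theta i \<theta> lam D B)"

definition J_sum :: "nat \<Rightarrow> (nat \<Rightarrow> real) \<Rightarrow> distr \<Rightarrow> nat \<Rightarrow> nat set \<Rightarrow> real" where
  "J_sum i lam D mt B = (\<Sum>\<theta>=1..mt. J_theta i \<theta> lam D B)"

end

theory Submission
  imports Defs
begin

(* Write L = lam i and u z = F(z + L). Summed over theta <= m, the rank integrand is f(z + L) times
   the probability that at most m - 1 of independent events with probabilities 1 - F(z + lam j),
   j ~= i, occur. For j < i we have lam j <= L, and the event for j is the union of an event of
   probability 1 - u z and an independent one of probability 1 - F(z + lam j) / u z. Conditioning
   on the set T of indices whose first event occurs writes the integrand as a sum over
   T of G z * h_T z, where G is, up to a binomial coefficient, the rank-(m /\ i) integrand for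
   lambda* on [i], and h_T is nondecreasing: u/(1 - u) increases, and F(x - c)/F(x) is
   nondecreasing in x for both families. As 1/(z + L) decreases, Chebyshev's integral inequality
   with weight G bounds the ratio of every term by the ratio for G alone, which is the term
   w = 0, theta = m /\ i of the maximum. *)

definition prob_at_most :: "'a set \<Rightarrow> ('a \<Rightarrow> real) \<Rightarrow> int \<Rightarrow> real" where
  "prob_at_most P b k =
     (\<Sum>S\<in>Pow P. if int (card S) \<le> k then (\<Prod>j\<in>S. b j) * (\<Prod>j\<in>P - S. 1 - b j) else 0)"

lemma sum_Pow_insert:
  assumes "finite A" "a \<notin> A"
  shows "(\<Sum>T\<in>Pow (insert a A). g T) = (\<Sum>T\<in>Pow A. g T) + (\<Sum>T\<in>Pow A. g (insert a T))"
proof -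
  have "inj_on (insert a) (Pow A)"
    using assms unfolding inj_on_def by (metis PowD subsetD insert_ident)
  moreover have "Pow A \<inter> insert a ` Pow A = {}" using assms by auto
  ultimately show ?thesis
    unfolding Pow_insert using assms by (simp add: sum.union_disjoint sum.reindex)
qed

lemma prob_at_most_empty: "prob_at_most {} b k = (if 0 \<le> k then 1 else 0)"
  unfolding prob_at_most_def by simp

lemma prob_at_most_neg: "k < 0 \<Longrightarrow> prob_at_most P b k = 0"
  unfolding prob_at_most_def by (intro sum.neutral) auto

lemma prob_at_most_insert:
  assumes "finite P" "a \<notin> P"
  shows "prob_at_most (insert a P) b k = (1 - b a) * prob_at_most P b k + b a * prob_at_most P b (k - 1)"
proof -
  have without_a: "(if int (card S) \<le> k then (\<Prod>j\<in>S. b j) * (\<Prod>j\<in>insert a P - S. 1 - b j) else 0)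
      = (1 - b a) * (if int (card S) \<le> k then (\<Prod>j\<in>S. b j) * (\<Prod>j\<in>P - S. 1 - b j) else 0)"
    if "S \<in> Pow P" for S
  proof -
    have "insert a P - S = insert a (P - S)" "a \<notin> P - S" "finite (P - S)" using that assms by auto
    then show ?thesis by simp
  qed
  have with_a: "(if int (card (insert a S)) \<le> k
        then (\<Prod>j\<in>insert a S. b j) * (\<Prod>j\<in>insert a P - insert a S. 1 - b j) else 0)
      = b a * (if int (card S) \<le> k - 1 then (\<Prod>j\<in>S. b j) * (\<Prod>j\<in>P - S. 1 - b j) else 0)"
    if "S \<in> Pow P" for S
  proof -
    have "insert a P - insert a S = P - S" "a \<notin> S" "finite S" using that assms finite_subset by auto
    then show ?thesis by (simp add: algebra_simps)
  qed
  show ?thesis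
    unfolding prob_at_most_def sum_Pow_insert[OF assms] sum_distrib_left
    by (intro arg_cong2[where f="(+)"] sum.cong refl) (use without_a with_a in blast)+
qed

lemma prob_at_most_nonneg:
  assumes "\<forall>j\<in>P. 0 \<le> b j \<and> b j \<le> 1"
  shows "0 \<le> prob_at_most P b k"
  unfolding prob_at_most_def using assms
  by (intro sum_nonneg) (auto intro!: mult_nonneg_nonneg prod_nonneg)

lemma prob_at_most_le_1:
  assumes "\<forall>j\<in>P. 0 \<le> b j \<and> b j \<le> 1"
  shows "prob_at_most P b k \<le> 1"
proof (cases "finite P")
  case True
  then show ?thesis
    using assms
  proof (induction P arbitrary: k rule: finite_induct)
    case empty
    then show ?case by (simp add: prob_at_most_empty)
  next
    case (insert a P)
    then have "prob_at_most P b k \<le> 1" "prob_at_most P b (k - 1) \<le> 1" "0 \<le> b a" "b a \<le> 1"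
      by auto
    then have "(1 - b a) * prob_at_most P b k + b a * prob_at_most P b (k - 1) \<le> (1 - b a) + b a"
      by (intro add_mono mult_left_le) auto
    then show ?case by (simp add: prob_at_most_insert insert.hyps)
  qed
next
  case False
  then show ?thesis unfolding prob_at_most_def by simp
qed

lemma prob_at_most_mono:
  assumes "\<forall>j\<in>P. 0 \<le> b j \<and> b j \<le> 1" "k \<le> k'"
  shows "prob_at_most P b k \<le> prob_at_most P b k'"
  unfolding prob_at_most_def using assms
  by (intro sum_mono) (auto intro!: mult_nonneg_nonneg prod_nonneg)

lemma prob_at_most_antimono:
  assumes "finite P" "\<forall>j\<in>P. 0 \<le> b j \<and> b j \<le> b' j \<and> b' j \<le> 1"
  shows "prob_at_most P b' k \<le> prob_at_most P b k"
  using assms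
proof (induction P arbitrary: k rule: finite_induct)
  case empty
  then show ?case by (simp add: prob_at_most_empty)
next
  case (insert a P)
  have b: "\<forall>j\<in>P. 0 \<le> b j \<and> b j \<le> 1" and b': "\<forall>j\<in>P. 0 \<le> b' j \<and> b' j \<le> 1"
    using insert.prems by force+
  have IH: "prob_at_most P b' k \<le> prob_at_most P b k" "prob_at_most P b' (k-1) \<le> prob_at_most P b (k-1)"
    using insert by auto
  have ba: "0 \<le> b a" "b a \<le> b' a" "b' a \<le> 1" using insert.prems by auto
  have k_mono: "prob_at_most P b (k-1) \<le> prob_at_most P b k" by (rule prob_at_most_mono[OF b]) simp
  have "prob_at_most (insert a P) b' k = (1 - b' a) * prob_at_most P b' k + b' a * prob_at_most P b' (k - 1)"
    by (rule prob_at_most_insert) (use insert in auto)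
  also have "\<dots> \<le> (1 - b' a) * prob_at_most P b k + b' a * prob_at_most P b (k - 1)"
    using IH ba by (intro add_mono mult_left_mono) auto
  also have "\<dots> \<le> (1 - b a) * prob_at_most P b k + b a * prob_at_most P b (k - 1)"
  proof -
    have "(b' a - b a) * prob_at_most P b (k - 1) \<le> (b' a - b a) * prob_at_most P b k"
      using k_mono ba by (intro mult_left_mono) auto
    then show ?thesis by (simp add: algebra_simps)
  qed
  also have "\<dots> = prob_at_most (insert a P) b k"
    by (rule prob_at_most_insert[symmetric]) (use insert in auto)
  finally show ?case .
qed

text \<open>Each event in \<open>A\<close> is forced with probability \<open>1 - u\<close> and otherwise occurs with
  probability \<open>b j\<close>; \<open>T\<close> is the set of forced events.\<close>
definition prob_at_most_thinned :: "'a set \<Rightarrow> 'a set \<Rightarrow> real \<Rightarrow> ('a \<Rightarrow> real) \<Rightarrow> int \<Rightarrow> real" where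
  "prob_at_most_thinned A C u b k = (\<Sum>T\<in>Pow A. (1 - u) ^ card T * u ^ (card A - card T) *
     prob_at_most ((A - T) \<union> C) b (k - int (card T)))"

lemma prob_at_most_thinned_insert:
  assumes "finite A" "a \<notin> A" "finite C" "a \<notin> C"
  shows "prob_at_most_thinned (insert a A) C u b k =
    u * (1 - b a) * prob_at_most_thinned A C u b k
      + ((1 - u) + u * b a) * prob_at_most_thinned A C u b (k - 1)"
proof -
  have a_not_in_T: "(1 - u) ^ card T * u ^ (card (insert a A) - card T) *
        prob_at_most ((insert a A - T) \<union> C) b (k - int (card T)) =
      u * (1 - b a) * ((1 - u) ^ card T * u ^ (card A - card T) *
        prob_at_most ((A - T) \<union> C) b (k - int (card T))) +
      u * b a * ((1 - u) ^ card T * u ^ (card A - card T) *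
        prob_at_most ((A - T) \<union> C) b (k - 1 - int (card T)))" if "T \<in> Pow A" for T
  proof -
    have "card T \<le> card A" using that assms by (auto intro: card_mono)
    then have "card (insert a A) - card T = Suc (card A - card T)" using assms by simp
    moreover have "(insert a A - T) \<union> C = insert a ((A - T) \<union> C)" using that assms by auto
    moreover have "finite ((A - T) \<union> C)" "a \<notin> (A - T) \<union> C" using assms by auto
    ultimately show ?thesis by (simp add: prob_at_most_insert algebra_simps)
  qed
  have a_in_T: "(1 - u) ^ card (insert a T) * u ^ (card (insert a A) - card (insert a T)) *
        prob_at_most ((insert a A - insert a T) \<union> C) b (k - int (card (insert a T))) =
      (1 - u) * ((1 - u) ^ card T * u ^ (card A - card T) *
        prob_at_most ((A - T) \<union> C) b (k - 1 - int (card T)))" if "T \<in> Pow A" for T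
  proof -
    have "finite T" "a \<notin> T" using that assms by (auto intro: finite_subset)
    then have "card (insert a T) = Suc (card T)" by simp
    moreover have "insert a A - insert a T = A - T" using that assms by auto
    ultimately show ?thesis using assms by (simp add: algebra_simps)
  qed
  define X where "X l T = (1 - u) ^ card T * u ^ (card A - card T) *
    prob_at_most ((A - T) \<union> C) b (l - int (card T))" for l T
  have "prob_at_most_thinned (insert a A) C u b k =
      (\<Sum>T\<in>Pow A. u * (1 - b a) * X k T + u * b a * X (k - 1) T) + (\<Sum>T\<in>Pow A. (1 - u) * X (k - 1) T)"
    unfolding prob_at_most_thinned_def sum_Pow_insert[OF assms(1,2)] X_def
    by (intro arg_cong2[where f = "(+)"] sum.cong refl a_not_in_T a_in_T) (simp_all add: diff_diff_add)
  also have "\<dots> = u * (1 - b a) * sum (X k) (Pow A) + u * b a * sum (X (k - 1)) (Pow A)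
      + (1 - u) * sum (X (k - 1)) (Pow A)"
    by (simp only: sum.distrib flip: sum_distrib_left)
  also have "\<dots> = u * (1 - b a) * sum (X k) (Pow A) + ((1 - u) + u * b a) * sum (X (k - 1)) (Pow A)"
    by (simp add: algebra_simps)
  finally show ?thesis
    unfolding prob_at_most_thinned_def X_def .
qed

lemma prob_at_most_thinning:
  assumes "finite A" "finite C" "A \<inter> C = {}"
    and "\<forall>j\<in>C. b' j = b j" and "\<forall>j\<in>A. b j = (1 - u) + u * b' j"
  shows "prob_at_most (A \<union> C) b k = prob_at_most_thinned A C u b' k"
  using assms
proof (induction A arbitrary: k rule: finite_induct)
  case empty
  then have "prob_at_most C b k = prob_at_most C b' k"
    unfolding prob_at_most_def by (intro sum.cong refl if_cong arg_cong2[where f="(*)"] prod.cong) auto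
  then show ?case by (simp add: prob_at_most_thinned_def)
next
  case (insert a A)
  have ba: "b a = (1 - u) + u * b' a" using insert.prems by simp
  have "prob_at_most (insert a A \<union> C) b k =
      (1 - b a) * prob_at_most_thinned A C u b' k + b a * prob_at_most_thinned A C u b' (k - 1)"
    using insert by (simp add: prob_at_most_insert)
  also have "\<dots> = u * (1 - b' a) * prob_at_most_thinned A C u b' k
      + ((1 - u) + u * b' a) * prob_at_most_thinned A C u b' (k - 1)"
    unfolding ba by (simp add: algebra_simps)
  also have "\<dots> = prob_at_most_thinned (insert a A) C u b' k"
    using insert by (simp add: prob_at_most_thinned_insert)
  finally show ?case .
qed

lemma sum_subsets_card_less:
  assumes "finite P"
  shows "(\<Sum>\<theta>=1..m. \<Sum>S | S \<subseteq> P \<and> card S = \<theta> - 1. g S) = (\<Sum>S\<in>Pow P. if card S < m then g S else 0)"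
proof -
  have "(\<Sum>\<theta>=1..m. \<Sum>S | S \<subseteq> P \<and> card S = \<theta> - 1. g S) =
        (\<Sum>\<theta>=1..m. \<Sum>S\<in>Pow P. if card S = \<theta> - 1 then g S else 0)"
  proof (rule sum.cong[OF refl])
    fix \<theta>
    have subsets: "{S. S \<subseteq> P \<and> card S = \<theta> - 1} = {S \<in> Pow P. card S = \<theta> - 1}" by auto
    show "(\<Sum>S | S \<subseteq> P \<and> card S = \<theta> - 1. g S) = (\<Sum>S\<in>Pow P. if card S = \<theta> - 1 then g S else 0)"
      unfolding subsets using assms by (intro sum.inter_filter) auto
  qed
  also have "\<dots> = (\<Sum>S\<in>Pow P. \<Sum>\<theta>=1..m. if card S = \<theta> - 1 then g S else 0)"
    by (rule sum.swap)
  also have "\<dots> = (\<Sum>S\<in>Pow P. if card S < m then g S else 0)"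
  proof (rule sum.cong[OF refl])
    fix S
    have "(\<Sum>\<theta>=1..m. if card S = \<theta> - 1 then g S else 0) = (\<Sum>\<theta>\<in>{1..m}. if \<theta> = card S + 1 then g S else 0)"
      by (intro sum.cong refl) auto
    then show "(\<Sum>\<theta>=1..m. if card S = \<theta> - 1 then g S else 0) = (if card S < m then g S else 0)"
      by simp
  qed
  finally show ?thesis .
qed

lemma weighted_integral_eq_0:
  fixes G f :: "'a \<Rightarrow> real"
  assumes "integrable M G" "\<And>x. 0 \<le> G x" "(\<integral>x. G x \<partial>M) = 0"
  shows "(\<integral>x. G x * f x \<partial>M) = 0"
proof -
  have "AE x in M. G x = 0" using assms by (subst (asm) integral_nonneg_eq_0_iff_AE) auto
  then have "AE x in M. G x * f x = 0" by auto
  then show ?thesis by (simp add: integral_eq_zero_AE)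
qed

text \<open>Chebyshev's integral inequality; the opposite ordering of \<open>h\<close> and \<open>p\<close> on the support
  of \<open>G\<close> is phrased through thresholds, since the proof only uses \<open>c = \<integral>G p / \<integral>G\<close>.\<close>
lemma chebyshev_integral_inequality:
  fixes M :: "'a measure" and G h p :: "'a \<Rightarrow> real"
  assumes iG: "integrable M G" and iGp: "integrable M (\<lambda>x. G x * p x)"
    and iGh: "integrable M (\<lambda>x. G x * h x)" and iGhp: "integrable M (\<lambda>x. G x * h x * p x)"
    and G_nonneg: "\<And>x. 0 \<le> G x" and Gp_nonneg: "\<And>x. 0 \<le> G x * p x"
    and opposite: "\<And>c. 0 < c \<Longrightarrow> \<exists>H. \<forall>x. G x * (h x - H) * (p x - c) \<le> 0"
  shows "(\<integral>x. G x * h x * p x \<partial>M) * (\<integral>x. G x \<partial>M) \<le> (\<integral>x. G x * h x \<partial>M) * (\<integral>x. G x * p x \<partial>M)"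
    and "(\<integral>x. G x \<partial>M) = 0 \<Longrightarrow> (\<integral>x. G x * h x * p x \<partial>M) = 0"
proof -
  have zero_if_G: "(\<integral>x. G x * h x * p x \<partial>M) = 0" "(\<integral>x. G x * h x \<partial>M) = 0"
    if "(\<integral>x. G x \<partial>M) = 0"
    using weighted_integral_eq_0[OF iG G_nonneg that, of "\<lambda>x. h x * p x"]
      weighted_integral_eq_0[OF iG G_nonneg that, of h] by (simp_all add: mult.assoc)
  have zero_if_Gp: "(\<integral>x. G x * h x * p x \<partial>M) = 0" if "(\<integral>x. G x * p x \<partial>M) = 0"
    using weighted_integral_eq_0[OF iGp Gp_nonneg that, of h] by (simp add: ac_simps)
  show "(\<integral>x. G x \<partial>M) = 0 \<Longrightarrow> (\<integral>x. G x * h x * p x \<partial>M) = 0" using zero_if_G by auto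
  show "(\<integral>x. G x * h x * p x \<partial>M) * (\<integral>x. G x \<partial>M) \<le> (\<integral>x. G x * h x \<partial>M) * (\<integral>x. G x * p x \<partial>M)"
  proof (cases "(\<integral>x. G x \<partial>M) = 0 \<or> (\<integral>x. G x * p x \<partial>M) = 0")
    case True
    then show ?thesis using zero_if_G zero_if_Gp by auto
  next
    case False
    have "0 \<le> (\<integral>x. G x \<partial>M)" "0 \<le> (\<integral>x. G x * p x \<partial>M)"
      using G_nonneg Gp_nonneg by (simp_all add: integral_nonneg_AE)
    then have pos: "0 < (\<integral>x. G x \<partial>M)" "0 < (\<integral>x. G x * p x \<partial>M)" using False by auto
    define c where "c = (\<integral>x. G x * p x \<partial>M) / (\<integral>x. G x \<partial>M)"
    have "0 < c" unfolding c_def using pos by simp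
    then obtain H where H: "\<And>x. G x * (h x - H) * (p x - c) \<le> 0" using opposite by blast
    have expand: "(\<lambda>x. G x * (h x - H) * (p x - c)) =
        (\<lambda>x. G x * h x * p x - c * (G x * h x) - H * (G x * p x) + (H * c) * G x)"
      by (auto simp: fun_eq_iff algebra_simps)
    have "0 \<le> (\<integral>x. - (G x * (h x - H) * (p x - c)) \<partial>M)"
      using H by (intro integral_nonneg_AE) (auto simp: le_minus_iff)
    then have "(\<integral>x. G x * (h x - H) * (p x - c) \<partial>M) \<le> 0" by simp
    also have "(\<integral>x. G x * (h x - H) * (p x - c) \<partial>M) =
        (\<integral>x. G x * h x * p x \<partial>M) - c * (\<integral>x. G x * h x \<partial>M) - H * (\<integral>x. G x * p x \<partial>M)
        + (H * c) * (\<integral>x. G x \<partial>M)"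
      unfolding expand using iG iGp iGh iGhp by simp
    finally have "(\<integral>x. G x * h x * p x \<partial>M) \<le> c * (\<integral>x. G x * h x \<partial>M)"
      using pos unfolding c_def by simp
    then show ?thesis
      using pos unfolding c_def by (simp add: field_simps)
  qed
qed

lemma divide_le_divide_cross:
  fixes a b c d :: real
  assumes "0 \<le> a" "0 \<le> b" "0 \<le> c" "0 \<le> d" "a * d \<le> b * c" "d = 0 \<Longrightarrow> a = 0"
  shows "a / b \<le> c / d"
proof (cases "b = 0 \<or> d = 0")
  case True
  then show ?thesis using assms by (auto intro: divide_nonneg_nonneg)
next
  case False
  then show ?thesis using assms by (simp add: field_simps)
qed

lemma sum_rank_integrand_eq_prob_at_most:
  assumes "finite B"
  shows "(\<Sum>\<theta>=1..m. rank_integrand D lam B i \<theta> z) =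
    prob_at_most (B - {i}) (\<lambda>j. 1 - cdf D (z + lam j)) (int m - 1) * dens D (z + lam i)"
proof -
  have "(\<Sum>\<theta>=1..m. \<Sum>S | S \<subseteq> B - {i} \<and> card S = \<theta> - 1.
        (\<Prod>j\<in>S. 1 - cdf D (z + lam j)) * (\<Prod>j\<in>B - (S \<union> {i}). cdf D (z + lam j))) =
      (\<Sum>S\<in>Pow (B - {i}). if card S < m then
        (\<Prod>j\<in>S. 1 - cdf D (z + lam j)) * (\<Prod>j\<in>B - (S \<union> {i}). cdf D (z + lam j)) else 0)"
    using assms by (intro sum_subsets_card_less) simp
  also have "\<dots> = prob_at_most (B - {i}) (\<lambda>j. 1 - cdf D (z + lam j)) (int m - 1)"
    unfolding prob_at_most_def
  proof (rule sum.cong[OF refl])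
    fix S assume "S \<in> Pow (B - {i})"
    then have "B - (S \<union> {i}) = B - {i} - S" by auto
    then show "(if card S < m then
        (\<Prod>j\<in>S. 1 - cdf D (z + lam j)) * (\<Prod>j\<in>B - (S \<union> {i}). cdf D (z + lam j)) else 0) =
      (if int (card S) \<le> int m - 1 then
        (\<Prod>j\<in>S. 1 - cdf D (z + lam j)) * (\<Prod>j\<in>B - {i} - S. 1 - (1 - cdf D (z + lam j))) else 0)"
      by simp
  qed
  finally show ?thesis
    unfolding rank_integrand_def sum_distrib_right[symmetric] by simp
qed

lemma rank_integrand_equal_locations:
  assumes "finite B" "i \<in> B" "1 \<le> \<theta>" and equal: "\<And>k. k \<in> B \<Longrightarrow> lam k = L"
  shows "rank_integrand D lam B i \<theta> z = real ((card B - 1) choose (\<theta> - 1)) *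
    ((1 - cdf D (z + L)) ^ (\<theta> - 1) * cdf D (z + L) ^ (card B - \<theta>) * dens D (z + L))"
proof -
  define Q where "Q = B - {i}"
  have Q: "finite Q" "card Q = card B - 1" unfolding Q_def using assms by auto
  have "(\<Prod>j\<in>S. 1 - cdf D (z + lam j)) * (\<Prod>j\<in>B - (S \<union> {i}). cdf D (z + lam j)) =
      (1 - cdf D (z + L)) ^ (\<theta> - 1) * cdf D (z + L) ^ (card B - \<theta>)"
    if S: "S \<subseteq> Q" "card S = \<theta> - 1" for S
  proof -
    have "B - (S \<union> {i}) = Q - S" unfolding Q_def by auto
    moreover have "card (Q - S) = card B - \<theta>"
      using S Q assms(3) by (simp add: card_Diff_subset finite_subset)
    ultimately show ?thesis
      using S equal unfolding Q_def by (simp add: subset_iff)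
  qed
  then have "rank_integrand D lam B i \<theta> z =
      (\<Sum>S | S \<subseteq> Q \<and> card S = \<theta> - 1. (1 - cdf D (z + L)) ^ (\<theta> - 1) * cdf D (z + L) ^ (card B - \<theta>))
        * dens D (z + L)"
    unfolding rank_integrand_def Q_def[symmetric] using equal assms(2) by simp
  then show ?thesis
    using n_subsets[OF Q(1), of "\<theta> - 1"] Q(2) by simp
qed

lemma cdf_measurable [measurable]: "cdf D \<in> borel_measurable borel"
proof (cases D)
  case (Frechet a)
  then have "cdf D = (\<lambda>x. if x \<le> 0 then 0 else exp (- (x powr (- a))))" by (auto simp: fun_eq_iff)
  then show ?thesis by simp
next
  case (Pareto a)
  then have "cdf D = (\<lambda>x. if x < 1 then 0 else 1 - x powr (- a))" by (auto simp: fun_eq_iff)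
  then show ?thesis by simp
qed

lemma dens_measurable [measurable]: "dens D \<in> borel_measurable borel"
proof (cases D)
  case (Frechet a)
  then have "dens D = (\<lambda>x. if x \<le> 0 then 0 else a * x powr (- (a + 1)) * exp (- (x powr (- a))))"
    by (auto simp: fun_eq_iff)
  then show ?thesis by simp
next
  case (Pareto a)
  then have "dens D = (\<lambda>x. if x < 1 then 0 else a * x powr (- (a + 1)))" by (auto simp: fun_eq_iff)
  then show ?thesis by simp
qed

lemma frechet_log_cdf_shift_mono:
  fixes a c x y :: real
  assumes "0 < a" "0 \<le> c" "c < x" "x \<le> y"
  shows "x powr (- a) - (x - c) powr (- a) \<le> y powr (- a) - (y - c) powr (- a)"
proof (rule deriv_nonneg_imp_mono[where g = "\<lambda>t. t powr (- a) - (t - c) powr (- a)"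
      and g' = "\<lambda>t. a * ((t - c) powr (- a - 1) - t powr (- a - 1))"])
  fix t assume "t \<in> {x..y}"
  then have t: "0 < t - c" "0 < t" using assms by auto
  then show "((\<lambda>t. t powr (- a) - (t - c) powr (- a)) has_real_derivative
      a * ((t - c) powr (- a - 1) - t powr (- a - 1))) (at t)"
    by (auto intro!: derivative_eq_intros simp: algebra_simps)
  have "t powr (- a - 1) \<le> (t - c) powr (- a - 1)"
    using t assms by (intro powr_mono2') auto
  then show "0 \<le> a * ((t - c) powr (- a - 1) - t powr (- a - 1))" using assms by simp
qed (use assms in auto)

lemma pareto_cdf_shift_ratio_mono:
  fixes a c x y :: real
  assumes "0 < a" "0 \<le> c" "c + 1 < x" "x \<le> y"
  shows "(1 - (x - c) powr (- a)) / (1 - x powr (- a)) \<le> (1 - (y - c) powr (- a)) / (1 - y powr (- a))"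
proof (rule deriv_nonneg_imp_mono[where g = "\<lambda>t. (1 - (t - c) powr (- a)) / (1 - t powr (- a))" and
    g' = "\<lambda>t. (a * (t - c) powr (- a - 1) * (1 - t powr (- a))
      - (1 - (t - c) powr (- a)) * (a * t powr (- a - 1)))
      / (1 - t powr (- a))\<^sup>2"])
  fix t assume "t \<in> {x..y}"
  then have t: "1 < t - c" "1 < t" using assms by auto
  have "t powr (- a) < 1" "(t - c) powr (- a) < 1" using t assms by (simp_all add: powr_minus_divide)
  then show "((\<lambda>t. (1 - (t - c) powr (- a)) / (1 - t powr (- a))) has_real_derivative
      (a * (t - c) powr (- a - 1) * (1 - t powr (- a)) - (1 - (t - c) powr (- a)) * (a * t powr (- a - 1)))
      / (1 - t powr (- a))\<^sup>2) (at t)"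
    using t by (auto intro!: derivative_eq_intros simp: algebra_simps power2_eq_square)
  have "t powr (- a - 1) \<le> (t - c) powr (- a - 1)" "t powr (- a) \<le> (t - c) powr (- a)"
    using t assms by (auto intro!: powr_mono2')
  then have "(1 - (t - c) powr (- a)) * (a * t powr (- a - 1))
      \<le> (1 - t powr (- a)) * (a * (t - c) powr (- a - 1))"
    using \<open>(t - c) powr (- a) < 1\<close> assms by (intro mult_mono) auto
  then show "0 \<le> (a * (t - c) powr (- a - 1) * (1 - t powr (- a))
      - (1 - (t - c) powr (- a)) * (a * t powr (- a - 1)))
      / (1 - t powr (- a))\<^sup>2"
    by (simp add: algebra_simps)
qed (use assms in auto)

lemma frechet_dens_le_linear:
  fixes a x :: real
  assumes "1 \<le> a" "0 < x" "x \<le> 1"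
  shows "a * x powr (- (a + 1)) * exp (- (x powr (- a))) \<le> 27 * a * x"
proof -
  define s where "s = x powr (- a)"
  have s: "0 < s" unfolding s_def using assms by simp
  have "s / 3 \<le> exp (s / 3)" using exp_ge_add_one_self[of "s / 3"] by linarith
  then have "(s / 3) ^ 3 \<le> exp (s / 3) ^ 3"
    using s by (intro power_mono) auto
  also have "\<dots> = exp s" by (simp add: exp_of_nat_mult[symmetric])
  finally have "exp (- s) \<le> 27 / s ^ 3"
    using s by (simp add: exp_minus field_simps)
  moreover have "s ^ 3 = x powr (- 3 * a)" unfolding s_def using assms
    by (simp add: powr_realpow[symmetric] powr_powr mult.commute)
  ultimately have "a * x powr (- (a + 1)) * exp (- s) \<le> 27 * a * (x powr (- (a + 1)) * x powr (3 * a))"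
    using assms by (simp add: powr_minus field_simps mult_left_mono)
  also have "x powr (- (a + 1)) * x powr (3 * a) = x powr (2 * a - 1)"
    using assms by (simp add: powr_add[symmetric])
  also have "x powr (2 * a - 1) \<le> x powr 1"
    using assms by (intro powr_mono') auto
  finally show ?thesis unfolding s_def using assms by simp
qed

lemma integrable_powr_tail:
  fixes b :: real
  assumes "1 < b"
  shows "integrable lborel (\<lambda>x::real. indicator {1..} x * x powr (- b))"
proof -
  have "(\<lambda>x::real. x powr (- b)) integrable_on {1..}"
    using has_integral_powr_to_inf[of "- b" 1] assms unfolding integrable_on_def by auto
  then have "(\<lambda>x::real. x powr (- b)) absolutely_integrable_on {1..}"
    by (rule nonnegative_absolutely_integrable_1) auto
  then show ?thesis
    unfolding set_integrable_def by (subst (asm) integrable_completion) auto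
qed

lemma integrable_bounded_mult:
  fixes f g :: "'a \<Rightarrow> real"
  assumes "integrable M g" "f \<in> borel_measurable M" "\<And>x. \<bar>f x\<bar> \<le> K"
  shows "integrable M (\<lambda>x. f x * g x)"
proof (rule Bochner_Integration.integrable_bound)
  show "integrable M (\<lambda>x. K * \<bar>g x\<bar>)" using assms(1) by auto
  show "AE x in M. norm (f x * g x) \<le> norm (K * \<bar>g x\<bar>)"
  proof (rule AE_I2)
    fix x
    have "\<bar>f x\<bar> * \<bar>g x\<bar> \<le> \<bar>K\<bar> * \<bar>g x\<bar>" using assms(3)[of x] by (intro mult_right_mono) auto
    then show "norm (f x * g x) \<le> norm (K * \<bar>g x\<bar>)" by (simp add: abs_mult)
  qed
qed (use assms in measurable)

locale frechet_or_pareto =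
  fixes D :: distr and a :: real
  assumes D_cases: "D = Frechet a \<or> D = Pareto a" and exponent_gt_1: "1 < a"
begin

lemma cdf_nonneg: "0 \<le> cdf D x"
  using D_cases exponent_gt_1 by (auto simp: powr_minus_divide ge_one_powr_ge_zero)

lemma cdf_less_1: "cdf D x < 1"
  using D_cases by auto

lemma cdf_mono:
  assumes "x \<le> y"
  shows "cdf D x \<le> cdf D y"
proof -
  have "y powr (- a) \<le> x powr (- a)" if "0 < x" using that assms exponent_gt_1 by (intro powr_mono2') auto
  then show ?thesis
    using D_cases assms cdf_nonneg[of y] by (auto simp: not_le not_less)
qed

lemma dens_nonneg: "0 \<le> dens D x"
  using D_cases exponent_gt_1 by auto

lemma dens_eq_0: "x < lep D \<or> x \<le> 0 \<Longrightarrow> dens D x = 0"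
  using D_cases by auto

lemma cdf_shift_ratio_mono:
  assumes c: "0 \<le> c" and xy: "x \<le> y"
  shows "cdf D (x - c) / cdf D x \<le> cdf D (y - c) / cdf D y"
proof (cases "cdf D (x - c) = 0")
  case True
  then show ?thesis using cdf_nonneg by simp
next
  case False
  show ?thesis using D_cases
  proof
    assume D: "D = Frechet a"
    then have "0 < x - c" using False by (cases "x - c \<le> 0") auto
    then have "exp (x powr (- a) - (x - c) powr (- a)) \<le> exp (y powr (- a) - (y - c) powr (- a))"
      using frechet_log_cdf_shift_mono[of a c x y] c xy exponent_gt_1 by auto
    then show ?thesis
      using D \<open>0 < x - c\<close> c xy by (simp add: exp_diff[symmetric] exp_minus_inverse)
  next
    assume D: "D = Pareto a"
    then have "1 \<le> x - c" "x - c \<noteq> 1" using False by (auto simp: not_less split: if_splits)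
    then have "1 < x - c" by simp
    then show ?thesis
      using D pareto_cdf_shift_ratio_mono[of a c x y] c xy exponent_gt_1 by auto
  qed
qed

lemma dens_bound:
  defines "bound x \<equiv> 27 * a * indicator {0..1} x + a * (indicator {1..} x * x powr (- (a + 1)))"
  shows "\<bar>dens D x\<bar> \<le> bound x" and "\<bar>dens D x / x\<bar> \<le> bound x"
proof -
  have "dens D x \<le> bound x \<and> dens D x / x \<le> bound x"
  proof (cases "0 < x \<and> x \<le> 1")
    case True
    have "dens D x \<le> 27 * a * x"
      using D_cases frechet_dens_le_linear[of a x] True exponent_gt_1 by (cases "x < 1") auto
    then have "dens D x \<le> 27 * a" "dens D x / x \<le> 27 * a"
      using True exponent_gt_1 by (auto simp: divide_le_eq intro: order_trans)
    moreover have "27 * a \<le> bound x"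
      using True exponent_gt_1 unfolding bound_def by (simp add: indicator_def)
    ultimately show ?thesis by simp
  next
    case False
    show ?thesis
    proof (cases "x \<le> 0")
      case True
      then show ?thesis using dens_eq_0[of x] exponent_gt_1 unfolding bound_def by (auto simp: indicator_def)
    next
      case False
      then have "1 < x" using \<open>\<not> (0 < x \<and> x \<le> 1)\<close> by simp
      then have "dens D x \<le> a * x powr (- (a + 1))"
        using D_cases exponent_gt_1 by (auto simp: mult_left_le)
      moreover have "dens D x / x \<le> dens D x"
        using \<open>1 < x\<close> dens_nonneg[of x] by (simp add: divide_le_eq mult_le_cancel_left1)
      ultimately show ?thesis using \<open>1 < x\<close> unfolding bound_def by (simp add: indicator_def)
    qed
  qed
  moreover have "0 \<le> dens D x / x"
    using dens_nonneg[of x] dens_eq_0[of x] by (cases "x \<le> 0") auto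
  ultimately show "\<bar>dens D x\<bar> \<le> bound x" "\<bar>dens D x / x\<bar> \<le> bound x"
    using dens_nonneg[of x] by auto
qed

lemma integrable_dens: "integrable lborel (dens D)" "integrable lborel (\<lambda>x. dens D x / x)"
proof -
  define bound where "bound x = 27 * a * indicator {0..1} x + a * (indicator {1..} x * x powr (- (a + 1)))"
    for x :: real
  have "integrable lborel bound"
    unfolding bound_def using exponent_gt_1 integrable_powr_tail[of "a + 1"] by auto
  moreover have "norm (dens D x) \<le> norm (bound x)" "norm (dens D x / x) \<le> norm (bound x)" for x
    using dens_bound[of x] unfolding bound_def by auto
  ultimately show "integrable lborel (dens D)" "integrable lborel (\<lambda>x. dens D x / x)"
    by (auto intro: Bochner_Integration.integrable_bound)
qed

lemma integrable_bounded_mult_dens: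
  fixes f :: "real \<Rightarrow> real"
  assumes [measurable]: "f \<in> borel_measurable borel" and f_bound: "\<And>z. \<bar>f z\<bar> \<le> K"
  shows "integrable lborel (\<lambda>z. f z * dens D (z + L))"
    and "integrable lborel (\<lambda>z. f z * dens D (z + L) / (z + L))"
proof -
  have "integrable lborel (\<lambda>z. dens D (z + L))" "integrable lborel (\<lambda>z. dens D (z + L) / (z + L))"
    using lborel_integrable_real_affine[OF integrable_dens(1), of 1 L]
      lborel_integrable_real_affine[OF integrable_dens(2), of 1 L] by (simp_all add: add.commute)
  from this[THEN integrable_bounded_mult[where f = f], OF _ f_bound]
  have "integrable lborel (\<lambda>z. f z * dens D (z + L))"
    "integrable lborel (\<lambda>z. f z * (dens D (z + L) / (z + L)))"
    by simp_all
  then show "integrable lborel (\<lambda>z. f z * dens D (z + L))"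
    "integrable lborel (\<lambda>z. f z * dens D (z + L) / (z + L))" by simp_all
qed


lemma integrable_rank_integrand:
  "integrable lborel (rank_integrand D lam B i \<theta>)"
  "integrable lborel (\<lambda>z. rank_integrand D lam B i \<theta> z / (z + lam i))"
proof -
  define R where "R z = (\<Sum>S | S \<subseteq> B - {i} \<and> card S = \<theta> - 1.
    (\<Prod>j\<in>S. 1 - cdf D (z + lam j)) * (\<Prod>j\<in>B - (S \<union> {i}). cdf D (z + lam j)))" for z
  have [measurable]: "R \<in> borel_measurable borel" unfolding R_def by measurable
  have "\<bar>R z\<bar> \<le> real (card {S. S \<subseteq> B - {i} \<and> card S = \<theta> - 1}) * 1" for z
  proof -
    have cdf_range: "0 \<le> cdf D x" "cdf D x \<le> 1" for x using cdf_nonneg cdf_less_1 less_imp_le by auto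
    have "0 \<le> R z" unfolding R_def
      using cdf_range by (intro sum_nonneg mult_nonneg_nonneg prod_nonneg) auto
    moreover have "R z \<le> real (card {S. S \<subseteq> B - {i} \<and> card S = \<theta> - 1}) * 1" unfolding R_def
      by (rule sum_bounded_above) (use cdf_range in \<open>auto intro!: mult_le_one prod_le_1 prod_nonneg\<close>)
    ultimately show ?thesis by simp
  qed
  from integrable_bounded_mult_dens[of R, OF _ this]
  show "integrable lborel (rank_integrand D lam B i \<theta>)"
    "integrable lborel (\<lambda>z. rank_integrand D lam B i \<theta> z / (z + lam i))"
    unfolding rank_integrand_def R_def by simp_all
qed

lemma rank_integrand_eq_0: "z < lep D - lam i \<Longrightarrow> rank_integrand D lam B i \<theta> z = 0"
  unfolding rank_integrand_def using dens_eq_0[of "z + lam i"] by simp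

lemma phi_theta_eq_integral: "phi_theta i \<theta> lam D B = (\<integral>z. rank_integrand D lam B i \<theta> z \<partial>lborel)"
  unfolding phi_theta_def set_lebesgue_integral_def
  by (intro Bochner_Integration.integral_cong refl) (auto simp: indicator_def rank_integrand_eq_0)

lemma J_theta_eq_integral:
  "J_theta i \<theta> lam D B = (\<integral>z. rank_integrand D lam B i \<theta> z / (z + lam i) \<partial>lborel)"
  unfolding J_theta_def set_lebesgue_integral_def
  by (intro Bochner_Integration.integral_cong refl) (auto simp: indicator_def rank_integrand_eq_0)

end

locale ordered_locations = frechet_or_pareto +
  fixes d m i :: nat and lam :: "nat \<Rightarrow> real"
  assumes m_pos: "1 \<le> m" and i_range: "1 \<le> i" "i \<le> d"
    and lam_mono: "\<And>j k. 1 \<le> j \<Longrightarrow> j \<le> k \<Longrightarrow> k \<le> d \<Longrightarrow> lam j \<le> lam k"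
begin

definition mi :: nat where "mi = min m i"

definition lam_star :: "nat \<Rightarrow> real" where
  "lam_star k = (if k \<le> i then lam i else lam k)"

definition cdf_i :: "real \<Rightarrow> real" where
  "cdf_i z = cdf D (z + lam i)"

definition thinned :: "real \<Rightarrow> nat \<Rightarrow> real" where
  "thinned z j = (if j \<in> {1..<i} then 1 - cdf D (z + lam j) / cdf_i z else 1 - cdf D (z + lam j))"

definition residual :: "nat set \<Rightarrow> real \<Rightarrow> real" where
  "residual T z = prob_at_most (({1..<i} - T) \<union> {i<..d}) (thinned z) (int m - 1 - int (card T))"

definition weight :: "real \<Rightarrow> real" where
  "weight z = (1 - cdf_i z) ^ (mi - 1) * cdf_i z ^ (i - mi) * dens D (z + lam i)"

definition factor :: "nat set \<Rightarrow> real \<Rightarrow> real" where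
  "factor T z = (cdf_i z / (1 - cdf_i z)) ^ (mi - 1 - card T) * residual T z"

lemma cdf_i_nonneg: "0 \<le> cdf_i z" and cdf_i_less_1: "cdf_i z < 1"
  unfolding cdf_i_def using cdf_nonneg cdf_less_1 by auto

lemma cdf_i_mono: "z1 \<le> z2 \<Longrightarrow> cdf_i z1 \<le> cdf_i z2"
  unfolding cdf_i_def by (simp add: cdf_mono)

lemma cdf_le_cdf_i: "j \<in> {1..<i} \<Longrightarrow> cdf D (z + lam j) \<le> cdf_i z"
  unfolding cdf_i_def using lam_mono[of j i] i_range by (intro cdf_mono) auto

lemma thinned_lower: "j \<in> {1..<i} \<Longrightarrow> thinned z j = 1 - cdf D (z + lam j) / cdf_i z"
  and thinned_other: "j \<notin> {1..<i} \<Longrightarrow> thinned z j = 1 - cdf D (z + lam j)"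
  unfolding thinned_def by (simp_all only: if_P if_not_P if_False)

lemma thinned_range: "0 \<le> thinned z j \<and> thinned z j \<le> 1"
proof (cases "j \<in> {1..<i}")
  case True
  have "cdf D (z + lam j) / cdf_i z \<le> 1"
    using cdf_le_cdf_i[OF True, of z] cdf_nonneg[of "z + lam j"]
    by (cases "cdf_i z = 0") (auto simp: divide_le_eq_1)
  then show ?thesis using True cdf_nonneg cdf_i_nonneg by (simp add: thinned_lower)
next
  case False
  then show ?thesis using cdf_nonneg less_imp_le[OF cdf_less_1] by (simp add: thinned_other)
qed

lemma thinned_antimono:
  assumes "z1 \<le> z2"
  shows "thinned z2 j \<le> thinned z1 j"
proof (cases "j \<in> {1..<i}")
  case True
  have "0 \<le> lam i - lam j" using True lam_mono[of j i] i_range by auto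
  then have "cdf D (z1 + lam i - (lam i - lam j)) / cdf D (z1 + lam i)
      \<le> cdf D (z2 + lam i - (lam i - lam j)) / cdf D (z2 + lam i)"
    using assms by (intro cdf_shift_ratio_mono) auto
  then show ?thesis using True by (simp add: thinned_lower cdf_i_def)
next
  case False
  then show ?thesis using assms by (simp add: thinned_other cdf_mono)
qed

lemma exceedance_split:
  assumes "j \<in> {1..<i}"
  shows "1 - cdf D (z + lam j) = (1 - cdf_i z) + cdf_i z * thinned z j"
proof (cases "cdf_i z = 0")
  case True
  then have "cdf D (z + lam j) = 0" using cdf_le_cdf_i[OF assms, of z] cdf_nonneg[of "z + lam j"] by simp
  then show ?thesis using True by simp
next
  case False
  then show ?thesis using assms by (simp add: thinned_lower field_simps)
qed

lemma rank_sum_eq_thinned: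
  "(\<Sum>\<theta>=1..m. rank_integrand D lam {1..d} i \<theta> z) =
    prob_at_most_thinned {1..<i} {i<..d} (cdf_i z) (thinned z) (int m - 1) * dens D (z + lam i)"
proof -
  have "{1..d} - {i} = {1..<i} \<union> {i<..d}" using i_range by auto
  moreover have "prob_at_most ({1..<i} \<union> {i<..d}) (\<lambda>j. 1 - cdf D (z + lam j)) (int m - 1) =
      prob_at_most_thinned {1..<i} {i<..d} (cdf_i z) (thinned z) (int m - 1)"
    by (rule prob_at_most_thinning) (auto simp: exceedance_split thinned_other)
  ultimately show ?thesis
    unfolding sum_rank_integrand_eq_prob_at_most[OF finite_atLeastAtMost] by simp
qed

lemma thinned_term_eq_weight_factor:
  assumes "T \<in> Pow {1..<i}"
  shows "(1 - cdf_i z) ^ card T * cdf_i z ^ (i - 1 - card T) * residual T z * dens D (z + lam i) =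
    weight z * factor T z"
proof (cases "card T \<le> mi - 1")
  case True
  then obtain n where n: "mi - 1 = card T + n" using le_Suc_ex by blast
  moreover have "i - 1 - card T = (i - mi) + n" using n i_range m_pos unfolding mi_def by auto
  moreover have "1 - cdf_i z \<noteq> 0" using cdf_i_less_1[of z] by simp
  ultimately show ?thesis unfolding weight_def factor_def
    by (simp add: power_add field_simps)
next
  case False
  have "card T \<le> i - 1" using assms card_mono[of "{1..<i}" T] by auto
  then have "int m - 1 - int (card T) < 0" using False i_range unfolding mi_def by auto
  then have "residual T z = 0" unfolding residual_def by (rule prob_at_most_neg)
  then show ?thesis unfolding factor_def by simp
qed

lemma residual_nonneg: "0 \<le> residual T z"
  unfolding residual_def using thinned_range by (intro prob_at_most_nonneg) auto

lemma residual_mono: "z1 \<le> z2 \<Longrightarrow> residual T z1 \<le> residual T z2"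
  unfolding residual_def using thinned_range thinned_antimono by (intro prob_at_most_antimono) auto

lemma factor_nonneg: "0 \<le> factor T z"
  unfolding factor_def using cdf_i_nonneg[of z] cdf_i_less_1[of z] residual_nonneg by simp

lemma factor_mono:
  assumes "z1 \<le> z2"
  shows "factor T z1 \<le> factor T z2"
proof -
  have odds_mono: "cdf_i z1 / (1 - cdf_i z1) \<le> cdf_i z2 / (1 - cdf_i z2)"
    using cdf_i_mono[OF assms] cdf_i_less_1 cdf_i_nonneg
    by (intro frac_le) (auto simp: less_imp_le)
  show ?thesis
    unfolding factor_def using odds_mono residual_mono[OF assms] residual_nonneg cdf_i_nonneg cdf_i_less_1
    by (intro mult_mono power_mono) (auto intro!: divide_nonneg_nonneg simp: less_imp_le)
qed

lemma weight_nonneg: "0 \<le> weight z"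
  unfolding weight_def using cdf_i_nonneg[of z] cdf_i_less_1[of z] dens_nonneg by simp

lemma weight_eq_0: "z + lam i \<le> 0 \<Longrightarrow> weight z = 0"
  unfolding weight_def using dens_eq_0 by simp

lemma weight_div_nonneg: "0 \<le> weight z / (z + lam i)"
  using weight_nonneg[of z] weight_eq_0[of z] by (cases "z + lam i \<le> 0") auto

text \<open>On the support of the weight, \<open>factor T\<close> increases and \<open>1 / (z + lam i)\<close> decreases, so one
  threshold point separates them.\<close>
lemma factor_inverse_opposite:
  assumes "0 < c"
  shows "\<exists>H. \<forall>z. weight z * (factor T z - H) * (1 / (z + lam i) - c) \<le> 0"
proof (intro exI allI)
  fix z
  define z0 where "z0 = 1 / c - lam i"
  have "(factor T z - factor T z0) * (1 / (z + lam i) - c) \<le> 0" if pos: "0 < z + lam i"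
  proof (cases "z < z0")
    case True
    then have "factor T z \<le> factor T z0" "c \<le> 1 / (z + lam i)"
      using factor_mono[of z z0] pos assms by (auto simp: z0_def field_simps)
    then show ?thesis by (intro mult_nonpos_nonneg) auto
  next
    case False
    then have "factor T z0 \<le> factor T z" "1 / (z + lam i) \<le> c"
      using factor_mono[of z0 z] pos assms by (auto simp: z0_def field_simps)
    then show ?thesis by (intro mult_nonneg_nonpos) auto
  qed
  then show "weight z * (factor T z - factor T z0) * (1 / (z + lam i) - c) \<le> 0"
    using weight_nonneg[of z] weight_eq_0[of z]
    by (cases "0 < z + lam i") (auto simp: mult.assoc intro: mult_nonneg_nonpos)
qed


lemma sum_rank_integrand_eq_weight_factor:
  "(\<Sum>\<theta>=1..m. rank_integrand D lam {1..d} i \<theta> z) = (\<Sum>T\<in>Pow {1..<i}. weight z * factor T z)"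
  unfolding rank_sum_eq_thinned prob_at_most_thinned_def residual_def[symmetric] sum_distrib_right
    card_atLeastLessThan
  by (intro sum.cong refl thinned_term_eq_weight_factor)

lemma integrable_weight:
  "integrable lborel weight" "integrable lborel (\<lambda>z. weight z / (z + lam i))"
proof -
  define g where "g z = (1 - cdf_i z) ^ (mi - 1) * cdf_i z ^ (i - mi)" for z
  have g_measurable: "g \<in> borel_measurable borel" unfolding g_def cdf_i_def by measurable
  have "\<bar>g z\<bar> \<le> 1" for z
    unfolding g_def using cdf_i_nonneg[of z] cdf_i_less_1[of z]
    by (auto intro!: mult_le_one power_le_one simp: abs_mult)
  from integrable_bounded_mult_dens[of g, OF g_measurable this]
  show "integrable lborel weight" "integrable lborel (\<lambda>z. weight z / (z + lam i))"
    unfolding weight_def g_def by simp_all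
qed

lemma integrable_weight_factor:
  assumes "T \<in> Pow {1..<i}"
  shows "integrable lborel (\<lambda>z. weight z * factor T z)"
    and "integrable lborel (\<lambda>z. weight z * factor T z / (z + lam i))"
proof -
  define g where "g z = (1 - cdf_i z) ^ card T * cdf_i z ^ (i - 1 - card T) * residual T z" for z
  have g_measurable: "g \<in> borel_measurable borel"
    unfolding g_def residual_def prob_at_most_def thinned_def cdf_i_def by measurable
  have "\<bar>g z\<bar> \<le> 1" for z
  proof -
    have "residual T z \<le> 1" unfolding residual_def using thinned_range by (intro prob_at_most_le_1) auto
    then show ?thesis
      unfolding g_def using cdf_i_nonneg[of z] cdf_i_less_1[of z] residual_nonneg[of T z]
      by (auto intro!: mult_le_one power_le_one simp: abs_mult)
  qed
  from integrable_bounded_mult_dens[of g, OF g_measurable this]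
  show "integrable lborel (\<lambda>z. weight z * factor T z)"
    "integrable lborel (\<lambda>z. weight z * factor T z / (z + lam i))"
    unfolding g_def thinned_term_eq_weight_factor[OF assms, symmetric] by simp_all
qed

lemma phi_sum_eq: "phi_sum i lam D m {1..d} = (\<Sum>T\<in>Pow {1..<i}. \<integral>z. weight z * factor T z \<partial>lborel)"
proof -
  have "phi_sum i lam D m {1..d} = (\<integral>z. (\<Sum>\<theta>=1..m. rank_integrand D lam {1..d} i \<theta> z) \<partial>lborel)"
    unfolding phi_sum_def phi_theta_eq_integral
    by (rule Bochner_Integration.integral_sum[symmetric]) (rule integrable_rank_integrand)
  also have "\<dots> = (\<Sum>T\<in>Pow {1..<i}. \<integral>z. weight z * factor T z \<partial>lborel)"
    unfolding sum_rank_integrand_eq_weight_factor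
    by (rule Bochner_Integration.integral_sum) (rule integrable_weight_factor)
  finally show ?thesis .
qed

lemma J_sum_eq:
  "J_sum i lam D m {1..d} = (\<Sum>T\<in>Pow {1..<i}. \<integral>z. weight z * factor T z / (z + lam i) \<partial>lborel)"
proof -
  have "J_sum i lam D m {1..d} = (\<integral>z. (\<Sum>\<theta>=1..m. rank_integrand D lam {1..d} i \<theta> z) / (z + lam i) \<partial>lborel)"
    unfolding J_sum_def J_theta_eq_integral sum_divide_distrib
    by (rule Bochner_Integration.integral_sum[symmetric]) (rule integrable_rank_integrand)
  also have "\<dots> = (\<Sum>T\<in>Pow {1..<i}. \<integral>z. weight z * factor T z / (z + lam i) \<partial>lborel)"
    unfolding sum_rank_integrand_eq_weight_factor sum_divide_distrib
    by (rule Bochner_Integration.integral_sum) (rule integrable_weight_factor)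
  finally show ?thesis .
qed

lemma rank_integrand_lam_star:
  "rank_integrand D lam_star {1..i} i mi z = real ((i - 1) choose (mi - 1)) * weight z"
  using rank_integrand_equal_locations[of "{1..i}" i mi lam_star "lam i" D z] i_range m_pos
  unfolding weight_def cdf_i_def lam_star_def mi_def by simp

lemma phi_theta_lam_star:
  "phi_theta i mi lam_star D {1..i} = real ((i - 1) choose (mi - 1)) * (\<integral>z. weight z \<partial>lborel)"
  unfolding phi_theta_eq_integral rank_integrand_lam_star by simp

lemma J_theta_lam_star:
  "J_theta i mi lam_star D {1..i} = real ((i - 1) choose (mi - 1)) * (\<integral>z. weight z / (z + lam i) \<partial>lborel)"
  unfolding J_theta_eq_integral rank_integrand_lam_star
  using integral_mult_right_zero[of lborel _ "\<lambda>z. weight z / (z + lam i)"] by (simp add: lam_star_def)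

lemma weighted_ratio_le:
  assumes "T \<in> Pow {1..<i}"
  shows "(\<integral>z. weight z * factor T z / (z + lam i) \<partial>lborel) * (\<integral>z. weight z \<partial>lborel)
      \<le> (\<integral>z. weight z * factor T z \<partial>lborel) * (\<integral>z. weight z / (z + lam i) \<partial>lborel)"
    and "(\<integral>z. weight z \<partial>lborel) = 0 \<Longrightarrow> (\<integral>z. weight z * factor T z / (z + lam i) \<partial>lborel) = 0"
  using chebyshev_integral_inequality[where G = weight and h = "factor T" and p = "\<lambda>z. 1 / (z + lam i)",
      OF integrable_weight(1) _ integrable_weight_factor(1)[OF assms] _ weight_nonneg _
        factor_inverse_opposite]
    integrable_weight(2) integrable_weight_factor(2)[OF assms] weight_div_nonneg
  by simp_all

theorem J_sum_div_phi_sum_le: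
  "J_sum i lam D m {1..d} / phi_sum i lam D m {1..d}
    \<le> J_theta i mi lam_star D {1..i} / phi_theta i mi lam_star D {1..i}"
proof -
  have weight_factor_div_nonneg: "0 \<le> weight z * factor T z / (z + lam i)" for T z
    using mult_nonneg_nonneg[OF weight_div_nonneg factor_nonneg] by simp
  have "J_sum i lam D m {1..d} / phi_sum i lam D m {1..d}
      \<le> (\<integral>z. weight z / (z + lam i) \<partial>lborel) / (\<integral>z. weight z \<partial>lborel)"
    unfolding phi_sum_eq J_sum_eq
  proof (rule divide_le_divide_cross)
    show "(\<Sum>T\<in>Pow {1..<i}. \<integral>z. weight z * factor T z / (z + lam i) \<partial>lborel) * (\<integral>z. weight z \<partial>lborel)
        \<le> (\<Sum>T\<in>Pow {1..<i}. \<integral>z. weight z * factor T z \<partial>lborel) * (\<integral>z. weight z / (z + lam i) \<partial>lborel)"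
      unfolding sum_distrib_right by (intro sum_mono weighted_ratio_le(1))
  qed (use weight_factor_div_nonneg weighted_ratio_le(2) weight_nonneg weight_div_nonneg factor_nonneg
        in \<open>auto intro!: sum_nonneg integral_nonneg_AE divide_nonneg_nonneg\<close>)
  also have "\<dots> = J_theta i mi lam_star D {1..i} / phi_theta i mi lam_star D {1..i}"
    unfolding phi_theta_lam_star J_theta_lam_star using i_range m_pos by (simp add: mi_def)
  finally show ?thesis .
qed

end

theorem lemma2:
  fixes d m i :: nat and \<alpha> :: real and D :: distr and lam :: "nat \<Rightarrow> real"
  assumes "1 \<le> m" and "m \<le> d"
    and "\<alpha> > 1"
    and "D \<in> {Frechet \<alpha>, Pareto \<alpha>}"
    and "\<forall>k\<in>{1..d}. 0 \<le> lam k"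
    and "\<forall>j k. 1 \<le> j \<and> j \<le> k \<and> k \<le> d \<longrightarrow> lam j \<le> lam k"
    and "i \<in> {1..d}"
  shows "J_sum i lam D m {1..d} / phi_sum i lam D m {1..d}
    \<le> Max ((\<lambda>(w, \<theta>).
          J_theta i \<theta> (\<lambda>k. if k \<le> i then lam i else lam k) D ({1..i} - {1..w}) /
          phi_theta i \<theta> (\<lambda>k. if k \<le> i then lam i else lam k) D ({1..i} - {1..w}))
        ` {(w, \<theta>). w \<in> {0..min m i - 1} \<and> \<theta> \<in> {1..min m i - w}})"
proof -
  interpret ordered_locations D \<alpha> d m i lam
    using assms(1,3,4,6,7) by unfold_locales auto
  let ?ratio = "\<lambda>(w, \<theta>).
    J_theta i \<theta> lam_star D ({1..i} - {1..w}) / phi_theta i \<theta> lam_star D ({1..i} - {1..w})"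
  let ?index = "{(w, \<theta>). w \<in> {0..min m i - 1} \<and> \<theta> \<in> {1..min m i - w}}"
  have "finite ?index"
    by (rule finite_subset[of _ "{0..min m i} \<times> {0..min m i}"]) auto
  moreover have "(0, mi) \<in> ?index" using assms(1,7) by (auto simp: mi_def)
  ultimately have "?ratio (0, mi) \<le> Max (?ratio ` ?index)" by (intro Max_ge finite_imageI imageI)
  then show ?thesis
    using J_sum_div_phi_sum_le unfolding lam_star_def[abs_def] by simp
qed

end
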